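(* Let $\mathbb{X}$ be a real or complex Banach algebra with identity, let $k\ge1$ be an integer, let $a_0,\dots,a_k,b_0,\dots,b_k\in\mathbb{X}$ with $a_k\ne0$ or $b_k\ne0$, and let $g_n:\mathbb{X}\to\mathbb{X}$, $n\ge0$, be functions such that for some real $\sigma>0$, $$|g_n(\xi)|\le\sigma|\xi|\quad\text{for all }\xi\in\mathbb{X}\text{ and all }n.$$ Assume $$\alpha:=\sum_{i=0}^{k}\big(|a_i|+\sigma|b_i|\big)<1.$$ Then every solution $\{x_n\}$ of $$x_{n+1}=\sum_{i=0}^{k}a_ix_{n-i}+g_n\Big(\sum_{i=0}^{k}b_ix_{n-i}\Big),\quad n=0,1,2,\dots$$ with initial values $x_0,x_{-1},\dots,x_{-k}\in\mathbb{X}$ satisfies, for all $n\ge1$, $$|x_n|\le\alpha^{n/(k+1)}\max\{|x_0|,|x_{-1}|,\dots,|x_{-k}|\}.$$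
   Context: A Banach algebra with identity is a Banach space $\mathbb{X}$ (norm $|\cdot|$) with an associative, bilinear multiplication satisfying $|xy|\le|x||y|$ and having an identity $1$ with $|1|=1$; scalar multiplication satisfies $\alpha(xy)=(\alpha x)y=x(\alpha y)$. A solution of the difference equation is the sequence generated by iteration from the $k+1$ initial values. *)

theory Defs
  imports "HOL-Analysis.Analysis"
begin

end

theory Submission
  imports Defs
begin

(* The argument splits into an algebraic part and a purely real part.
   (1) In a normed algebra, a weighted sum of elements of norm at most c has norm at
       most (sum of the norms of the weights) * c.  Applied to both sums of the
       recurrence, together with the bound on g n, this shows: if the k+1 most
       recent terms have norm at most c, the next term has norm at most alpha * c.
   (2) A nonnegative real sequence with this "delay inequality" property decays like
       alpha ^ (m/(k+1)): by induction on n, u m is bounded by the nonincreasing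
       envelope alpha powr (max m 0 / (k+1)) * M for all -k <= m <= n, where M is
       the maximum of the initial values; the step works because one factor alpha
       pays for the k+1 positions by which the window is shifted. *)

lemma norm_weighted_sum_le:
  fixes w y :: "'i \<Rightarrow> 'a :: real_normed_algebra"
  assumes bound: "\<And>i. i \<in> I \<Longrightarrow> norm (y i) \<le> c"
  shows "norm (\<Sum>i\<in>I. w i * y i) \<le> (\<Sum>i\<in>I. norm (w i)) * c"
proof -
  have "norm (\<Sum>i\<in>I. w i * y i) \<le> (\<Sum>i\<in>I. norm (w i * y i))"
    by (rule norm_sum)
  also have "\<dots> \<le> (\<Sum>i\<in>I. norm (w i) * c)"
  proof (rule sum_mono)
    fix i assume "i \<in> I"
    have "norm (w i * y i) \<le> norm (w i) * norm (y i)" by (rule norm_mult_ineq)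
    also have "\<dots> \<le> norm (w i) * c" using bound[OF \<open>i \<in> I\<close>] by (simp add: mult_left_mono)
    finally show "norm (w i * y i) \<le> norm (w i) * c" .
  qed
  also have "\<dots> = (\<Sum>i\<in>I. norm (w i)) * c" by (simp add: sum_distrib_right)
  finally show ?thesis .
qed

lemma recurrence_step_bound:
  fixes a b y :: "nat \<Rightarrow> 'a :: real_normed_algebra"
    and h :: "'a \<Rightarrow> 'a"
  assumes h_bound: "\<And>\<xi>. norm (h \<xi>) \<le> \<sigma> * norm \<xi>"
    and sigma_nonneg: "\<sigma> \<ge> 0"
    and y_bound: "\<And>i. i \<le> k \<Longrightarrow> norm (y i) \<le> c"
  shows "norm ((\<Sum>i\<le>k. a i * y i) + h (\<Sum>i\<le>k. b i * y i))
           \<le> (\<Sum>i\<le>k. norm (a i) + \<sigma> * norm (b i)) * c"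
proof -
  have a_part: "norm (\<Sum>i\<le>k. a i * y i) \<le> (\<Sum>i\<le>k. norm (a i)) * c"
    by (rule norm_weighted_sum_le) (simp add: y_bound)
  have "norm (\<Sum>i\<le>k. b i * y i) \<le> (\<Sum>i\<le>k. norm (b i)) * c"
    by (rule norm_weighted_sum_le) (simp add: y_bound)
  then have b_part: "norm (h (\<Sum>i\<le>k. b i * y i)) \<le> \<sigma> * ((\<Sum>i\<le>k. norm (b i)) * c)"
    using h_bound[of "\<Sum>i\<le>k. b i * y i"] sigma_nonneg
    by (meson mult_left_mono order_trans)
  have "norm ((\<Sum>i\<le>k. a i * y i) + h (\<Sum>i\<le>k. b i * y i))
        \<le> norm (\<Sum>i\<le>k. a i * y i) + norm (h (\<Sum>i\<le>k. b i * y i))"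
    by (rule norm_triangle_ineq)
  also have "\<dots> \<le> (\<Sum>i\<le>k. norm (a i)) * c + \<sigma> * ((\<Sum>i\<le>k. norm (b i)) * c)"
    using a_part b_part by (rule add_mono)
  also have "\<dots> = (\<Sum>i\<le>k. norm (a i) + \<sigma> * norm (b i)) * c"
    by (simp add: sum.distrib sum_distrib_left algebra_simps)
  finally show ?thesis .
qed

text \<open>Moving the window forward by \<open>k+1\<close> positions costs one factor \<open>\<alpha>\<close> in the exponent:
  \<open>\<alpha> \<cdot> \<alpha>^(max (n-k) 0/(k+1)) \<le> \<alpha>^((n+1)/(k+1))\<close> for \<open>0 < \<alpha> \<le> 1\<close>.\<close>

lemma powr_window_shift:
  fixes \<alpha> :: real and n k :: nat
  assumes "0 < \<alpha>" "\<alpha> \<le> 1"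
  shows "\<alpha> * \<alpha> powr (real_of_int (max (int n - int k) 0) / real (k + 1))
           \<le> \<alpha> powr (real (n + 1) / real (k + 1))"
proof -
  have "real (n + 1) \<le> real (k + 1) + real_of_int (max (int n - int k) 0)"
    by simp
  then have "real (n + 1) / real (k + 1)
             \<le> (real (k + 1) + real_of_int (max (int n - int k) 0)) / real (k + 1)"
    by (rule divide_right_mono) simp
  also have "\<dots> = 1 + real_of_int (max (int n - int k) 0) / real (k + 1)"
    by (simp add: add_divide_distrib)
  finally have exponents: "real (n + 1) / real (k + 1)
                            \<le> 1 + real_of_int (max (int n - int k) 0) / real (k + 1)" .
  have "\<alpha> * \<alpha> powr (real_of_int (max (int n - int k) 0) / real (k + 1))
        = \<alpha> powr (1 + real_of_int (max (int n - int k) 0) / real (k + 1))"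
    using assms(1) by (simp add: powr_add)
  also have "\<dots> \<le> \<alpha> powr (real (n + 1) / real (k + 1))"
    using exponents assms by (intro powr_mono') simp_all
  finally show ?thesis .
qed

lemma delay_inequality_decay:
  fixes u :: "int \<Rightarrow> real" and \<alpha> :: real and k :: nat
  assumes alpha_pos: "0 < \<alpha>" and alpha_le: "\<alpha> \<le> 1"
    and nonneg: "\<And>m. 0 \<le> u m"
    and step: "\<And>n c. (\<And>i. i \<le> k \<Longrightarrow> u (int n - int i) \<le> c) \<Longrightarrow> u (int n + 1) \<le> \<alpha> * c"
  shows "u (int n) \<le> \<alpha> powr (real n / real (k + 1)) * Max ((\<lambda>j. u (- int j)) ` {..k})"
proof -
  define M where "M = Max ((\<lambda>j. u (- int j)) ` {..k})"
  define B where "B m = \<alpha> powr (real_of_int (max m 0) / real (k + 1)) * M" for m :: int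
  have initial: "u m \<le> M" if "- int k \<le> m" "m \<le> 0" for m
    unfolding M_def using that by (intro Max_ge) (auto intro!: image_eqI[where x = "nat (- m)"])
  have M_nonneg: "0 \<le> M"
    using initial[of 0] nonneg[of 0] by simp
  have B_antimono: "B m' \<le> B m" if "m \<le> m'" for m m'
    unfolding B_def using that alpha_pos alpha_le M_nonneg
    by (intro mult_right_mono powr_mono') (auto simp: divide_right_mono)
  have envelope: "\<forall>m. - int k \<le> m \<and> m \<le> int n \<longrightarrow> u m \<le> B m" for n
  proof (induction n)
    case 0
    show ?case using initial alpha_pos by (simp add: B_def)
  next
    case (Suc n)
    have window: "u (int n - int i) \<le> B (int n - int k)" if "i \<le> k" for i
    proof -
      have "u (int n - int i) \<le> B (int n - int i)" using Suc.IH that by simp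
      also have "\<dots> \<le> B (int n - int k)" using that by (intro B_antimono) simp
      finally show ?thesis .
    qed
    have "u (int n + 1) \<le> \<alpha> * B (int n - int k)"
      using window by (rule step)
    also have "\<dots> \<le> B (int n + 1)"
      using powr_window_shift[OF alpha_pos alpha_le, of n k] M_nonneg
      by (simp add: B_def mult.assoc[symmetric] mult_right_mono add.commute)
    finally have new_term: "u (int n + 1) \<le> B (int n + 1)" .
    show ?case
    proof (intro allI impI)
      fix m assume "- int k \<le> m \<and> m \<le> int (Suc n)"
      then consider "- int k \<le> m \<and> m \<le> int n" | "m = int n + 1" by linarith
      then show "u m \<le> B m" using Suc.IH new_term by cases auto
    qed
  qed
  have "u (int n) \<le> B (int n)"
    using envelope[of n] by simp
  then show ?thesis by (simp add: B_def M_def)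
qed

lemma decay_rate_pos:
  fixes a b :: "nat \<Rightarrow> 'a :: real_normed_vector"
  assumes "a k \<noteq> 0 \<or> b k \<noteq> 0" and "\<sigma> > 0"
  shows "0 < (\<Sum>i\<le>k. norm (a i) + \<sigma> * norm (b i))"
proof -
  have "0 < norm (a k) + \<sigma> * norm (b k)"
    using assms by (auto intro: add_pos_nonneg add_nonneg_pos)
  also have "\<dots> \<le> (\<Sum>i\<le>k. norm (a i) + \<sigma> * norm (b i))"
    using assms(2) by (intro member_le_sum) auto
  finally show ?thesis .
qed

theorem lemma2:
  fixes a b :: "nat \<Rightarrow> 'a :: {real_normed_algebra_1, banach}"
    and g :: "nat \<Rightarrow> 'a \<Rightarrow> 'a"
    and x :: "int \<Rightarrow> 'a"
    and k :: nat and \<sigma> :: real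
  assumes k: "k \<ge> 1"
    and nz: "a k \<noteq> 0 \<or> b k \<noteq> 0"
    and sigma_pos: "\<sigma> > 0"
    and g_bound: "\<And>n \<xi>. norm (g n \<xi>) \<le> \<sigma> * norm \<xi>"
    and alpha_lt: "(\<Sum>i\<le>k. norm (a i) + \<sigma> * norm (b i)) < 1"
    and rec: "\<And>n::nat. x (int n + 1) =
       (\<Sum>i\<le>k. a i * x (int n - int i)) + g n (\<Sum>i\<le>k. b i * x (int n - int i))"
  shows "\<forall>n::nat. n \<ge> 1 \<longrightarrow>
     norm (x (int n)) \<le> (\<Sum>i\<le>k. norm (a i) + \<sigma> * norm (b i)) powr (real n / real (k + 1))
        * Max ((\<lambda>j::nat. norm (x (- int j))) ` {..k})"
proof (intro allI impI)
  fix n :: nat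
  let ?\<alpha> = "\<Sum>i\<le>k. norm (a i) + \<sigma> * norm (b i)"
  have step: "norm (x (int m + 1)) \<le> ?\<alpha> * c"
    if "\<And>i. i \<le> k \<Longrightarrow> norm (x (int m - int i)) \<le> c" for m c
    unfolding rec
    using g_bound sigma_pos that
    by (intro recurrence_step_bound[where y = "\<lambda>i. x (int m - int i)"]) auto
  show "norm (x (int n)) \<le> ?\<alpha> powr (real n / real (k + 1))
          * Max ((\<lambda>j::nat. norm (x (- int j))) ` {..k})"
    using decay_rate_pos[of a k b \<sigma>] nz sigma_pos alpha_lt step
    by (intro delay_inequality_decay[where u = "\<lambda>m. norm (x m)"]) auto
qed

end
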